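(* Let $(u_k)_{k\in\mathbb{N}}$ be the positive roots of the equation $u=\tan(u)$. Then for every $s\in(0,1)$ there exists $k_0\in\mathbb{N}$ such that $u_{k_0}$ is not a root of the equation $u/s=\tan(u/s)$. *)

theory Defs
  imports Complex_Main
begin

end

theory Submission
  imports Defs "HOL-Analysis.Complex_Transcendental"
begin

text \<open>The positive roots of \<open>tan x = x\<close> are the points \<open>x\<^sub>m \<in> (m\<pi>, m\<pi> + \<pi>/2)\<close>, \<open>m \<ge> 1\<close>,
  and they satisfy \<open>x\<^sub>m + arctan (1/x\<^sub>m) = (2m+1)\<pi>/2\<close>. If every \<open>x\<^sub>m / s\<close> were again a root,
  dividing this phase identity by \<open>s\<close> and comparing with the phase identity of \<open>x\<^sub>m / s\<close>
  would put \<open>(2m+1)/s\<close> within \<open>O(1/m)\<close> above an integer for every \<open>m\<close>. Taking differences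
  in \<open>m\<close> forces \<open>2/s\<close> to be an integer, but then \<open>(2m+1)/s\<close> is a half-integer, whose
  distance from the integers below it is at least \<open>1/2\<close>.\<close>

lemma Ints_if_approximable:
  fixes x C :: real
  assumes approx: "\<And>m. m \<ge> 1 \<Longrightarrow> \<exists>d::int. \<bar>x - of_int d\<bar> < C / real m"
  shows "x \<in> \<int>"
proof (rule ccontr)
  assume "x \<notin> \<int>"
  define c where "c = min (x - of_int \<lfloor>x\<rfloor>) (of_int \<lfloor>x\<rfloor> + 1 - x)"
  have "c > 0"
    using \<open>x \<notin> \<int>\<close> of_int_floor_le[of x] real_of_int_floor_add_one_gt[of x]
    unfolding c_def by (metis Ints_of_int min_less_iff_conj diff_gt_0_iff_gt order_le_less)
  have far: "c \<le> \<bar>x - of_int d\<bar>" for d :: int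
  proof (cases "d \<le> \<lfloor>x\<rfloor>")
    case True
    then show ?thesis unfolding c_def by (smt (verit) of_int_le_iff)
  next
    case False
    then show ?thesis unfolding c_def by (smt (verit) of_int_le_iff of_int_add of_int_1)
  qed
  obtain m :: nat where m: "real m > C / c"
    using reals_Archimedean2 by blast
  have "C / c \<ge> 0"
  proof -
    obtain d :: int where "\<bar>x - of_int d\<bar> < C / real 1"
      using approx[of 1] by auto
    then show ?thesis
      using \<open>c > 0\<close> by simp
  qed
  with m have "real m > 0"
    by linarith
  then have "m \<ge> 1" "C / real m < c"
    using m \<open>c > 0\<close> by (auto simp: field_simps)
  then obtain d :: int where "\<bar>x - of_int d\<bar> < C / real m"
    using approx by blast
  with far[of d] \<open>C / real m < c\<close> show False
    by linarith
qed

lemma odd_multiples_not_approaching_Ints_from_above: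
  fixes L C :: real
  shows "\<not> (\<forall>m\<ge>1. \<exists>j::int. 0 < L * (2 * real m + 1) - of_int j
                             \<and> L * (2 * real m + 1) - of_int j < C / real m)"
proof
  assume "\<forall>m\<ge>1. \<exists>j::int. 0 < L * (2 * real m + 1) - of_int j
                        \<and> L * (2 * real m + 1) - of_int j < C / real m"
  then obtain J :: "nat \<Rightarrow> int"
    where J: "\<And>m. m \<ge> 1 \<Longrightarrow> 0 < L * (2 * real m + 1) - of_int (J m)
                             \<and> L * (2 * real m + 1) - of_int (J m) < C / real m"
    by metis
  have "C > 0"
    using J[of 1] by simp
  \<comment> \<open>Consecutive approximations differ by \<open>2L\<close> up to the error, so \<open>2L\<close> is an integer.\<close>
  have "2 * L \<in> \<int>"
  proof (rule Ints_if_approximable)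
    fix m :: nat assume "m \<ge> 1"
    have "C / real (m + 1) \<le> C / real m"
      using \<open>m \<ge> 1\<close> \<open>C > 0\<close> by (intro divide_left_mono) auto
    moreover have "L * (2 * real (m + 1) + 1) = L * (2 * real m + 1) + 2 * L"
      by (simp add: algebra_simps)
    ultimately have "\<bar>2 * L - of_int (J (m + 1) - J m)\<bar> < C / real m"
      using J[OF \<open>m \<ge> 1\<close>] J[of "m + 1"] unfolding abs_less_iff of_int_diff by linarith
    then show "\<exists>d::int. \<bar>2 * L - of_int d\<bar> < C / real m" ..
  qed
  then obtain K :: int where K: "2 * L = of_int K"
    by (auto elim: Ints_cases)
  obtain m :: nat where m: "real m > 2 * C"
    using reals_Archimedean2 by blast
  then have "m \<ge> 1" "2 * (C / real m) < 1"
    using \<open>C > 0\<close> by (auto simp: field_simps)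
  define e where "e = L * (2 * real m + 1) - of_int (J m)"
  define z where "z = K * (2 * int m + 1) - 2 * J m"
  have "of_int z = 2 * e"
    unfolding z_def e_def using K by (simp add: algebra_simps)
  moreover have "0 < e" "e < C / real m"
    unfolding e_def using J[OF \<open>m \<ge> 1\<close>] by auto
  ultimately have "0 < (of_int z :: real)" "(of_int z :: real) < 1"
    using \<open>2 * (C / real m) < 1\<close> by linarith+
  then show False
    by simp
qed

lemma tan_eq_self_phase:
  fixes x :: real
  assumes "x > 0" "tan x = x"
  shows "\<exists>i::int. x + arctan (1/x) = of_int i * (pi/2)"
proof -
  have "cos x \<noteq> 0"
    using assms by (auto simp: tan_def)
  then have sin_x: "sin x = x * cos x"
    using assms(2) by (simp add: tan_def field_simps)
  have sin_t: "sin (arctan (1/x)) = (1/x) * cos (arctan (1/x))"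
    by (simp add: sin_arctan cos_arctan)
  have "cos (x + arctan (1/x)) = 0"
    using sin_x sin_t assms(1) by (simp add: cos_add)
  then show ?thesis
    unfolding cos_zero_iff_int by blast
qed

lemma tan_eq_self_phase_interval:
  fixes x :: real and m :: nat
  assumes "real m * pi < x" "x < real m * pi + pi/2" "tan x = x"
  shows "x + arctan (1/x) = (2 * real m + 1) * (pi/2)"
proof -
  have "x > 0"
    using assms(1) by (smt (verit) of_nat_0_le_iff pi_gt_zero mult_nonneg_nonneg)
  then obtain i :: int where i: "x + arctan (1/x) = of_int i * (pi/2)"
    using tan_eq_self_phase assms(3) by blast
  have "0 < arctan (1/x)" "arctan (1/x) < pi/2"
    using \<open>x > 0\<close> arctan_ubound by auto
  then have "real m * pi < of_int i * (pi/2)" "of_int i * (pi/2) < real m * pi + pi"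
    using assms(1,2) i by linarith+
  then have "pi * (2 * real m) < pi * of_int i" "pi * of_int i < pi * (2 * real m + 2)"
    by (simp_all add: algebra_simps)
  then have "2 * real m < of_int i" "of_int i < 2 * real m + 2"
    using mult_less_cancel_left_pos pi_gt_zero by blast+
  then have "i = 2 * int m + 1"
    by linarith
  then show ?thesis
    using i by simp
qed

lemma tan_eq_self_root_exists:
  fixes m :: nat
  assumes "m \<ge> 1"
  shows "\<exists>x. real m * pi < x \<and> x < real m * pi + pi/2 \<and> tan x = x"
proof -
  define c where "c = real m * pi + pi/2"
  have "c > 0"
    unfolding c_def using pi_gt_zero by (simp add: add_nonneg_pos)
  define e where "e = arctan (1/c)"
  have e: "0 < e" "e < pi/2"
    using \<open>c > 0\<close> arctan_ubound unfolding e_def by auto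
  define b where "b = pi/2 - e"
  have "tan b = c"
    unfolding b_def tan_cot e_def tan_arctan using \<open>c > 0\<close> by simp
  let ?h = "\<lambda>t. tan t - (real m * pi + t)"
  \<comment> \<open>By periodicity of \<open>tan\<close>, \<open>m\<pi> + t\<close> is a root iff \<open>?h t = 0\<close>.\<close>
  have "continuous_on {0..b} ?h"
  proof (intro continuous_at_imp_continuous_on ballI)
    fix t assume "t \<in> {0..b}"
    then have "cos t \<noteq> 0"
      using cos_gt_zero_pi[of t] e pi_gt_zero unfolding b_def by auto
    then show "isCont ?h t"
      by (intro continuous_intros) auto
  qed
  moreover have "?h 0 \<le> 0" "0 \<le> ?h b" "0 \<le> b"
    using \<open>tan b = c\<close> e unfolding b_def c_def by auto
  ultimately obtain t where t: "0 \<le> t" "t \<le> b" "?h t = 0"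
    using IVT'[of ?h 0 0 b] by auto
  have "t \<noteq> 0"
    using t(3) assms pi_gt_zero by auto
  then show ?thesis
    using t e unfolding b_def
    by (intro exI[of _ "real m * pi + t"]) (auto simp: add.commute)
qed

lemma tan_eq_self_scaled_phase_gap:
  fixes s x :: real and m :: nat
  assumes s: "0 < s" "s < 1" and "m \<ge> 1"
    and x: "real m * pi < x" "x < real m * pi + pi/2" "tan x = x"
    and scaled: "tan (x/s) = x/s"
  shows "\<exists>j::int. 0 < (2 * real m + 1) / s - of_int j
                  \<and> (2 * real m + 1) / s - of_int j < 1 / (s * real m)"
proof -
  have "real m > 0" "real m * pi > 0"
    using \<open>m \<ge> 1\<close> pi_gt_zero by auto
  then have "x > 0"
    using x(1) by linarith
  define a where "a = arctan (1/x)"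
  define b where "b = arctan (1/(x/s))"
  have phase: "x + a = (2 * real m + 1) * (pi/2)"
    unfolding a_def using tan_eq_self_phase_interval x by blast
  obtain j :: int where j: "x/s + b = of_int j * (pi/2)"
    unfolding b_def using tan_eq_self_phase[of "x/s"] \<open>x > 0\<close> s scaled by auto
  have gap: "((2 * real m + 1) / s - of_int j) * (pi/2) = a/s - b"
  proof -
    have "(2 * real m + 1) / s * (pi/2) = (x + a) / s"
      unfolding phase by simp
    then show ?thesis
      using j by (simp add: algebra_simps add_divide_distrib)
  qed
  have "0 < b" "b < a" "a < a/s"
    unfolding a_def b_def using \<open>x > 0\<close> s
    by (simp_all add: arctan_less_iff divide_strict_right_mono less_divide_eq)
  then have "0 < ((2 * real m + 1) / s - of_int j) * (pi/2)"
    unfolding gap by linarith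
  then have lower: "0 < (2 * real m + 1) / s - of_int j"
    by (simp add: zero_less_mult_iff)
  have "a \<le> 1/x"
    unfolding a_def using \<open>x > 0\<close> by (intro arctan_le_self) simp
  have "1/x < 1 / (real m * pi)"
    using x(1) \<open>real m * pi > 0\<close> by (simp add: frac_less2)
  with \<open>a \<le> 1/x\<close> have "a/s < 1 / (s * real m * pi)"
    using s by (simp add: divide_strict_right_mono field_simps)
  also have "\<dots> \<le> 1 / (s * real m) * (pi/2)"
  proof -
    have "2 \<le> pi * pi"
      using pi_gt3 mult_mono[of 3 pi 3 pi] by simp
    then show ?thesis
      using s \<open>real m > 0\<close> pi_gt_zero by (simp add: field_simps)
  qed
  finally have "((2 * real m + 1) / s - of_int j) * (pi/2) < 1 / (s * real m) * (pi/2)"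
    unfolding gap using \<open>0 < b\<close> by linarith
  then have "(2 * real m + 1) / s - of_int j < 1 / (s * real m)"
    using pi_gt_zero mult_less_cancel_right_pos[of "pi/2"] by (metis half_gt_zero)
  with lower show ?thesis
    by blast
qed

theorem lemmaA1:
  fixes u :: "nat \<Rightarrow> real" and s :: real
  assumes roots: "range u = {x. x > 0 \<and> x = tan x}"
    and s: "0 < s" "s < 1"
  shows "\<exists>k0. \<not> (u k0 / s = tan (u k0 / s))"
proof (rule ccontr)
  assume "\<not> ?thesis"
  then have scaled: "tan (x/s) = x/s" if "x > 0" "tan x = x" for x
    using that roots by (metis (mono_tags, lifting) mem_Collect_eq rangeE)
  have "\<forall>m\<ge>1. \<exists>j::int. 0 < (1/s) * (2 * real m + 1) - of_int j
                      \<and> (1/s) * (2 * real m + 1) - of_int j < (1/s) / real m"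
  proof (intro allI impI)
    fix m :: nat assume "m \<ge> 1"
    then obtain x where x: "real m * pi < x" "x < real m * pi + pi/2" "tan x = x"
      using tan_eq_self_root_exists by blast
    have "x > 0"
      using x(1) \<open>m \<ge> 1\<close> pi_gt_zero by (smt (verit) of_nat_0_le_iff mult_nonneg_nonneg)
    then obtain j :: int where "0 < (2 * real m + 1) / s - of_int j"
        "(2 * real m + 1) / s - of_int j < 1 / (s * real m)"
      using tan_eq_self_scaled_phase_gap[OF s \<open>m \<ge> 1\<close> x scaled] x(3) by blast
    then show "\<exists>j::int. 0 < (1/s) * (2 * real m + 1) - of_int j
                     \<and> (1/s) * (2 * real m + 1) - of_int j < (1/s) / real m"
      by auto
  qed
  then show False
    using odd_multiples_not_approaching_Ints_from_above by blast
qed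

end
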